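(* For every positive constant $\varepsilon$, there is a deterministic Congested Clique algorithm which computes a proper $O(a^{2+\varepsilon})$-vertex-coloring of an input graph $G$ with arboricity $a\ge 2$ within $O(\log^* n)$ rounds.
   Context: Congested Clique model: there are $n$ processors (vertices) with distinct IDs of $O(\log n)$ bits; computation proceeds in synchronous rounds; in each round every pair of vertices may exchange a message of $O(\log n)$ bits; local computation is free. The input is a graph $G=(V,E')$ on the same vertex set; each vertex initially knows its incident edges in $G$, and $a$ is known to all vertices. The arboricity of a graph is the minimum number of forests whose union covers its edge set. A proper $k$-coloring is a map $\varphi:V\to\{1,\dots,k\}$ with $\varphi(u)\ne\varphi(v)$ for every edge $\{u,v\}$. $\log^* n$ is the number of times $\log_2$ must be iterated starting from $n$ until the value is below $2$. *)

theory Defs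
  imports Complex_Main
begin

definition simple_graph :: "nat set \<Rightarrow> nat set set \<Rightarrow> bool" where
  "simple_graph V E \<longleftrightarrow> (\<forall>e\<in>E. \<exists>u v. e = {u, v} \<and> u \<noteq> v \<and> u \<in> V \<and> v \<in> V)"

definition nbrs :: "nat set set \<Rightarrow> nat \<Rightarrow> nat set" where
  "nbrs E v = {u. {u, v} \<in> E}"

definition is_forest :: "nat set set \<Rightarrow> bool" where
  "is_forest F \<longleftrightarrow> \<not> (\<exists>vs. 3 \<le> length vs \<and> distinct vs \<and>
      (\<forall>i < length vs. {vs ! i, vs ! ((i + 1) mod length vs)} \<in> F))"

definition arboricity :: "nat set set \<Rightarrow> nat" where
  "arboricity E = (LEAST k. \<exists>F :: nat \<Rightarrow> nat set set.
      (\<Union>i<k. F i) = E \<and> (\<forall>i<k. is_forest (F i)))"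

definition proper_coloring :: "nat set set \<Rightarrow> (nat \<Rightarrow> nat) \<Rightarrow> bool" where
  "proper_coloring E \<phi> \<longleftrightarrow> (\<forall>u v. {u, v} \<in> E \<longrightarrow> \<phi> u \<noteq> \<phi> v)"

definition logstar :: "nat \<Rightarrow> nat" where
  "logstar n = (LEAST i. ((\<lambda>x. log 2 x) ^^ i) (real n) < 2)"

text \<open>A deterministic algorithm with local states of type 's.
  init n a V v N: initial state of the vertex with ID v, knowing n, a, the set of all IDs V
  and the IDs N of its neighbours in the input graph.
  send s w: message (a natural number) that a vertex in state s sends to vertex w.
  step s r: new state after receiving r u from each vertex u (r u = 0 for non-senders).
  out s: the colour output in state s.\<close>
record 's cc_alg =
  cc_init :: "nat \<Rightarrow> nat \<Rightarrow> nat set \<Rightarrow> nat \<Rightarrow> nat set \<Rightarrow> 's"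
  cc_send :: "'s \<Rightarrow> nat \<Rightarrow> nat"
  cc_step :: "'s \<Rightarrow> (nat \<Rightarrow> nat) \<Rightarrow> 's"
  cc_out  :: "'s \<Rightarrow> nat"

fun cc_run :: "'s cc_alg \<Rightarrow> nat \<Rightarrow> nat set \<Rightarrow> nat set set \<Rightarrow> nat \<Rightarrow> nat \<Rightarrow> 's" where
  "cc_run A a V E 0 = (\<lambda>v. cc_init A (card V) a V v (nbrs E v))"
| "cc_run A a V E (Suc t) = (\<lambda>v. cc_step A (cc_run A a V E t v)
      (\<lambda>u. if u \<in> V \<and> u \<noteq> v then cc_send A (cc_run A a V E t u) v else 0))"

end

theory Submission
  imports Defs
begin

text \<open>Order the vertices by ID and cut them into at most \<open>a\<close> blocks of \<open>n div a + 1\<close>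
  consecutive vertices. A forest on \<open>k\<close> vertices has at most \<open>k - 1\<close> edges, so in a graph of
  arboricity \<open>a\<close> every vertex set \<open>U\<close> spans at most \<open>a (|U| - 1)\<close> edges. Hence the subgraph
  induced by a block has at most \<open>2n\<close> adjacency entries, and every induced subgraph has a
  vertex of degree below \<open>2a\<close>, so greedy colouring needs only \<open>2a\<close> colours.

  Three rounds suffice for every vertex to learn the subgraph induced by its own block: first
  all vertices broadcast their degree inside their block; this fixes a layout of each block's
  adjacency lists in an array of length below \<open>2n\<close>, in which vertex \<open>x mod n\<close> relays position
  \<open>x\<close>. Then every vertex sends each entry of its list to the relay of its position, and finally
  each relay forwards its (at most two) positions of a block to every member of that block.
  All members of a block then compute the same \<open>2a\<close>-colouring of it, and offsetting it by
  \<open>2a\<close> times the block number gives a proper colouring with at most \<open>2a\<^sup>2\<close> colours, computed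
  in a constant number of rounds.\<close>

section \<open>Forests, arboricity and degenerate colourings\<close>

definition pair_edges :: "nat set set \<Rightarrow> bool" where
  "pair_edges F \<longleftrightarrow> (\<forall>e\<in>F. \<exists>u v. e = {u, v} \<and> u \<noteq> v)"

lemma pair_edges_subset: "pair_edges F \<Longrightarrow> G \<subseteq> F \<Longrightarrow> pair_edges G"
  unfolding pair_edges_def by blast

lemma pair_edges_obtain_other_end:
  assumes "pair_edges F" "e \<in> F" "x \<in> e"
  obtains z where "e = {x, z}" "z \<noteq> x"
  using assms unfolding pair_edges_def by (metis doubleton_eq_iff insertE singletonD)

lemma finite_Union_pair_edges: "finite F \<Longrightarrow> pair_edges F \<Longrightarrow> finite (\<Union>F)"
  unfolding pair_edges_def by (intro finite_Union) auto

lemma pair_edges_no_loop: "pair_edges F \<Longrightarrow> {x, x} \<notin> F"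
  unfolding pair_edges_def by (auto simp: doubleton_eq_iff)

lemma simple_graph_pair_edges: "simple_graph V E \<Longrightarrow> pair_edges E"
  unfolding simple_graph_def pair_edges_def by blast

lemma simple_graph_finite:
  assumes "finite V" "simple_graph V E"
  shows "finite E"
proof -
  have "E \<subseteq> Pow V" using assms(2) unfolding simple_graph_def by auto
  with assms(1) show ?thesis by (meson finite_Pow_iff finite_subset)
qed

lemma is_forest_subset: "is_forest F \<Longrightarrow> G \<subseteq> F \<Longrightarrow> is_forest G"
  unfolding is_forest_def by blast

lemma is_forest_singleton: "is_forest {e}"
  unfolding is_forest_def
proof
  assume "\<exists>vs. 3 \<le> length vs \<and> distinct vs \<and>
    (\<forall>i<length vs. {vs ! i, vs ! ((i + 1) mod length vs)} \<in> {e})"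
  then obtain vs where len: "3 \<le> length vs" and dist: "distinct vs"
    and cyc: "\<forall>i<length vs. {vs ! i, vs ! ((i + 1) mod length vs)} \<in> {e}" by blast
  have ne: "vs \<noteq> []" using len by auto
  with cyc have e01: "{vs ! 0, vs ! 1} = e" using len by auto
  have e12: "{vs ! 1, vs ! 2} = e" using cyc[rule_format, of 1] len by (simp add: numeral_2_eq_2)
  have "vs ! 0 \<noteq> vs ! 1" "vs ! 0 \<noteq> vs ! 2"
    using nth_eq_iff_index_eq[OF dist, of 0 1] nth_eq_iff_index_eq[OF dist, of 0 2] len ne by auto
  with e01 e12 show False by (auto simp: doubleton_eq_iff)
qed

definition is_path :: "nat set set \<Rightarrow> nat list \<Rightarrow> bool" where
  "is_path F ps \<longleftrightarrow> distinct ps \<and> (\<forall>i. Suc i < length ps \<longrightarrow> {ps ! i, ps ! Suc i} \<in> F)"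

lemma is_path_drop: "is_path F ps \<Longrightarrow> is_path F (drop j ps)"
  unfolding is_path_def by (simp add: add.commute)

lemma is_path_snoc:
  assumes "is_path F ps" "ps \<noteq> []" "z \<notin> set ps" "{last ps, z} \<in> F"
  shows "is_path F (ps @ [z])"
proof -
  have "{(ps @ [z]) ! i, (ps @ [z]) ! Suc i} \<in> F" if "Suc i < length (ps @ [z])" for i
  proof (cases "Suc i < length ps")
    case True
    with assms(1) show ?thesis by (simp add: is_path_def nth_append)
  next
    case False
    with that have "i = length ps - 1" by simp
    with assms(2,4) show ?thesis by (simp add: nth_append last_conv_nth)
  qed
  with assms(1,3) show ?thesis unfolding is_path_def by simp
qed

lemma closed_path_not_forest:
  assumes "is_path F ps" "3 \<le> length ps" "{last ps, hd ps} \<in> F"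
  shows "\<not> is_forest F"
proof -
  have ne: "ps \<noteq> []" using assms(2) by auto
  have "{ps ! i, ps ! ((i + 1) mod length ps)} \<in> F" if "i < length ps" for i
  proof (cases "Suc i < length ps")
    case True
    with assms(1) show ?thesis by (simp add: is_path_def)
  next
    case False
    with that have "i = length ps - 1" "i + 1 = length ps" by simp_all
    with assms(3) ne show ?thesis by (simp add: last_conv_nth hd_conv_nth)
  qed
  with assms(1,2) show ?thesis unfolding is_forest_def is_path_def by blast
qed

lemma obtain_longest_path:
  assumes "finite F" "F \<noteq> {}" "pair_edges F"
  obtains ps where "is_path F ps" "set ps \<subseteq> \<Union>F" "2 \<le> length ps"
    and "\<And>qs. is_path F qs \<Longrightarrow> set qs \<subseteq> \<Union>F \<Longrightarrow> 2 \<le> length qs \<Longrightarrow> length qs \<le> length ps"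
proof -
  define P where "P ps \<longleftrightarrow> is_path F ps \<and> set ps \<subseteq> \<Union>F \<and> 2 \<le> length ps" for ps
  obtain e where "e \<in> F" using assms(2) by blast
  moreover obtain u v where "e = {u, v}" "u \<noteq> v"
    using assms(3) \<open>e \<in> F\<close> unfolding pair_edges_def by blast
  ultimately have "P [u, v]" unfolding P_def is_path_def by auto
  moreover have "length ps < card (\<Union>F) + 1" if "P ps" for ps
  proof -
    have "length ps = card (set ps)" using that unfolding P_def is_path_def by (simp add: distinct_card)
    also have "\<dots> \<le> card (\<Union>F)"
      using that finite_Union_pair_edges[OF assms(1,3)] unfolding P_def by (simp add: card_mono)
    finally show ?thesis by simp
  qed
  ultimately obtain ps where "P ps" and "\<And>qs. P qs \<Longrightarrow> length qs \<le> length ps"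
    using ex_has_greatest_nat[of P "[u, v]" length "card (\<Union>F) + 1"] by blast
  with that show ?thesis unfolding P_def by blast
qed

text \<open>A longest path cannot be extended at its last vertex \<open>x\<close>; a second edge at \<open>x\<close> would
  therefore close a cycle.\<close>

lemma forest_has_leaf:
  assumes "finite F" "F \<noteq> {}" "pair_edges F" "is_forest F"
  shows "\<exists>x\<in>\<Union>F. card {e\<in>F. x \<in> e} \<le> 1"
proof (rule ccontr)
  assume "\<not> ?thesis"
  then have deg: "2 \<le> card {e\<in>F. x \<in> e}" if "x \<in> \<Union>F" for x
    using that by force
  obtain ps where path: "is_path F ps" and sub: "set ps \<subseteq> \<Union>F" and len: "2 \<le> length ps"
    and longest: "\<And>qs. is_path F qs \<Longrightarrow> set qs \<subseteq> \<Union>F \<Longrightarrow> 2 \<le> length qs \<Longrightarrow> length qs \<le> length ps"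
    using obtain_longest_path[OF assms(1-3)] by blast
  have ne: "ps \<noteq> []" using len by auto
  define x y where "x = last ps" and "y = ps ! (length ps - 2)"
  have "Suc (length ps - 2) = length ps - 1" using len by simp
  then have "Suc (length ps - 2) < length ps" "ps ! Suc (length ps - 2) = x"
    using ne unfolding x_def by (simp_all add: last_conv_nth)
  then have "{y, x} \<in> F" using path unfolding is_path_def y_def by metis
  have "x \<in> \<Union>F" using sub last_in_set[OF ne] unfolding x_def by blast
  then have "card {{y, x}} < card {e\<in>F. x \<in> e}" using deg by fastforce
  then have "\<not> {e\<in>F. x \<in> e} \<subseteq> {{y, x}}" by (meson card_mono finite.emptyI finite.insertI leD)
  then obtain e where "e \<in> F" "x \<in> e" "e \<noteq> {y, x}" by blast
  then obtain z where xz: "{x, z} \<in> F" and "z \<noteq> x" "z \<noteq> y"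
    using pair_edges_obtain_other_end[OF assms(3)] by (metis insert_commute)
  show False
  proof (cases "z \<in> set ps")
    case False
    have "is_path F (ps @ [z])" using is_path_snoc[OF path ne False] xz unfolding x_def by simp
    moreover have "set (ps @ [z]) \<subseteq> \<Union>F" using sub xz by auto
    ultimately have "length (ps @ [z]) \<le> length ps" using len by (intro longest) auto
    then show False by simp
  next
    case True
    then obtain j where j: "j < length ps" "ps ! j = z" by (metis in_set_conv_nth)
    have "j \<noteq> length ps - 1" "j \<noteq> length ps - 2"
      using j \<open>z \<noteq> x\<close> \<open>z \<noteq> y\<close> ne unfolding x_def y_def by (auto simp: last_conv_nth)
    with j have "3 \<le> length (drop j ps)" by simp
    moreover have "last (drop j ps) = x" "hd (drop j ps) = z"
      using j unfolding x_def by (simp_all add: hd_drop_conv_nth)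
    ultimately have "\<not> is_forest F"
      using closed_path_not_forest[OF is_path_drop[OF path]] xz by metis
    with assms(4) show False by simp
  qed
qed

lemma card_forest_le:
  assumes "finite S" "is_forest F" "pair_edges F" "F \<subseteq> Pow S"
  shows "card F \<le> card S - 1"
  using assms
proof (induction "card S" arbitrary: S F rule: less_induct)
  case less
  show ?case
  proof (cases "F = {}")
    case False
    have finF: "finite F" using less.prems(1,4) by (meson finite_Pow_iff finite_subset)
    obtain x where "x \<in> \<Union>F" and leaf: "card {e\<in>F. x \<in> e} \<le> 1"
      using forest_has_leaf[OF finF False less.prems(3,2)] by blast
    then obtain e z where "e \<in> F" "e = {x, z}" "z \<noteq> x"
      using pair_edges_obtain_other_end[OF less.prems(3)] by blast
    then have "x \<in> S" "z \<in> S - {x}" using less.prems(4) by auto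
    define F' where "F' = {e\<in>F. x \<notin> e}"
    have "F' \<subseteq> F" unfolding F'_def by blast
    have "card (S - {x}) < card S" using less.prems(1) \<open>x \<in> S\<close> by (rule card_Diff1_less)
    then have IH: "card F' \<le> card (S - {x}) - 1"
    proof (rule less.hyps)
      show "is_forest F'" using less.prems(2) \<open>F' \<subseteq> F\<close> by (rule is_forest_subset)
      show "pair_edges F'" using less.prems(3) \<open>F' \<subseteq> F\<close> by (rule pair_edges_subset)
      show "F' \<subseteq> Pow (S - {x})" using less.prems(4) unfolding F'_def by blast
    qed (use less.prems(1) in simp)
    have "card (S - {x}) \<noteq> 0" using \<open>z \<in> S - {x}\<close> less.prems(1) by auto
    have "F = F' \<union> {e\<in>F. x \<in> e}" unfolding F'_def by blast
    then have "card F \<le> card F' + card {e\<in>F. x \<in> e}" by (metis card_Un_le)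
    with IH leaf \<open>card (S - {x}) \<noteq> 0\<close> \<open>x \<in> S\<close> less.prems(1) show ?thesis by simp
  qed simp
qed

lemma arboricity_cover:
  assumes "finite E"
  obtains F where "(\<Union>i<arboricity E. F i) = E" "\<forall>i<arboricity E. is_forest (F i)"
proof -
  define P where "P k \<longleftrightarrow> (\<exists>F :: nat \<Rightarrow> nat set set. (\<Union>i<k. F i) = E \<and> (\<forall>i<k. is_forest (F i)))"
    for k
  obtain es where "set es = E" using finite_list[OF assms] by blast
  then have "(\<Union>i<length es. {es ! i}) = E" by (auto simp: in_set_conv_nth)
  then have "P (length es)" unfolding P_def using is_forest_singleton by blast
  then have "P (Least P)" by (rule LeastI)
  then show ?thesis using that unfolding arboricity_def P_def by blast
qed

lemma card_edges_within_le:
  assumes "finite E" "pair_edges E" "finite U"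
  shows "card {e\<in>E. e \<subseteq> U} \<le> arboricity E * (card U - 1)"
proof -
  obtain F where cover: "(\<Union>i<arboricity E. F i) = E"
    and forests: "\<forall>i<arboricity E. is_forest (F i)"
    using arboricity_cover[OF assms(1)] by blast
  have "{e\<in>E. e \<subseteq> U} = (\<Union>i<arboricity E. {e\<in>F i. e \<subseteq> U})" using cover by blast
  then have "card {e\<in>E. e \<subseteq> U} \<le> (\<Sum>i<arboricity E. card {e\<in>F i. e \<subseteq> U})"
    by (simp add: card_UN_le)
  also have "\<dots> \<le> (\<Sum>i<arboricity E. card U - 1)"
  proof (rule sum_mono)
    fix i assume "i \<in> {..<arboricity E}"
    then have sub: "{e\<in>F i. e \<subseteq> U} \<subseteq> F i" "{e\<in>F i. e \<subseteq> U} \<subseteq> E" using cover by blast+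
    have "is_forest {e\<in>F i. e \<subseteq> U}"
      using forests \<open>i \<in> {..<arboricity E}\<close> is_forest_subset[OF _ sub(1)] by blast
    moreover have "pair_edges {e\<in>F i. e \<subseteq> U}" using pair_edges_subset[OF assms(2) sub(2)] .
    ultimately show "card {e\<in>F i. e \<subseteq> U} \<le> card U - 1"
      using card_forest_le[OF assms(3)] by blast
  qed
  finally show ?thesis by simp
qed

lemma card_nbrs_Int:
  assumes "pair_edges E" "x \<in> U"
  shows "card (nbrs E x \<inter> U) = card {e\<in>E. e \<subseteq> U \<and> x \<in> e}"
proof (rule bij_betw_same_card[of "\<lambda>u. {u, x}"], rule bij_betwI')
  fix e assume e: "e \<in> {e\<in>E. e \<subseteq> U \<and> x \<in> e}"
  then obtain z where "e = {x, z}" using pair_edges_obtain_other_end[OF assms(1)] by blast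
  with e show "\<exists>u\<in>nbrs E x \<inter> U. e = {u, x}" unfolding nbrs_def by (auto simp: insert_commute)
qed (use assms(2) in \<open>auto simp: nbrs_def doubleton_eq_iff\<close>)

lemma sum_card_nbrs_Int:
  assumes "finite U" "pair_edges E"
  shows "(\<Sum>x\<in>U. card (nbrs E x \<inter> U)) = 2 * card {e\<in>E. e \<subseteq> U}"
proof -
  define EU where "EU = {e\<in>E. e \<subseteq> U}"
  have "EU \<subseteq> Pow U" unfolding EU_def by blast
  then have "finite EU" using assms(1) by (meson finite_Pow_iff finite_subset)
  have "(\<Sum>x\<in>U. card (nbrs E x \<inter> U)) = (\<Sum>x\<in>U. card {e\<in>EU. x \<in> e})"
    using card_nbrs_Int[OF assms(2)] unfolding EU_def by (simp add: conj_assoc)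
  also have "\<dots> = (\<Sum>x\<in>U. \<Sum>e\<in>EU. if x \<in> e then 1 else 0)"
    using sum.inter_filter[OF \<open>finite EU\<close>, of "\<lambda>_. 1::nat"] by simp
  also have "\<dots> = (\<Sum>e\<in>EU. \<Sum>x\<in>U. if x \<in> e then 1 else 0)" by (rule sum.swap)
  also have "\<dots> = (\<Sum>e\<in>EU. card e)"
  proof (rule sum.cong[OF refl])
    fix e assume "e \<in> EU"
    then have "{x\<in>U. x \<in> e} = e" unfolding EU_def by blast
    then show "(\<Sum>x\<in>U. if x \<in> e then 1 else 0) = card e"
      using sum.inter_filter[OF assms(1), of "\<lambda>_. 1::nat" "\<lambda>x. x \<in> e"] by simp
  qed
  also have "\<dots> = (\<Sum>e\<in>EU. 2)"
    using assms(2) unfolding EU_def pair_edges_def by (intro sum.cong) auto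
  finally show ?thesis unfolding EU_def by simp
qed

lemma exists_degree_less:
  assumes "finite U" "U \<noteq> {}" "pair_edges E" "card {e\<in>E. e \<subseteq> U} \<le> a * (card U - 1)" "0 < a"
  shows "\<exists>x\<in>U. card (nbrs E x \<inter> U) < 2 * a"
proof (rule ccontr)
  assume "\<not> ?thesis"
  then have "card U * (2 * a) \<le> (\<Sum>x\<in>U. card (nbrs E x \<inter> U))"
    using sum_mono[of U "\<lambda>_. 2 * a" "\<lambda>x. card (nbrs E x \<inter> U)"] by (simp add: not_less)
  also have "\<dots> = 2 * card {e\<in>E. e \<subseteq> U}" by (rule sum_card_nbrs_Int[OF assms(1,3)])
  also have "\<dots> \<le> 2 * (a * (card U - 1))" using assms(4) by simp
  finally have "card U * (2 * a) \<le> 2 * (a * (card U - 1))" .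
  moreover obtain k where "card U = Suc k" using assms(1,2) by (metis card_gt_0_iff gr0_conv_Suc)
  ultimately show False using assms(5) by (simp add: algebra_simps)
qed

lemma coloring_extend:
  assumes "pair_edges E" "finite T" "x \<in> T" "card (nbrs E x \<inter> T) < k"
    and less: "\<forall>y\<in>T - {x}. c y < k"
    and proper: "\<forall>y\<in>T - {x}. \<forall>z\<in>T - {x}. {y, z} \<in> E \<longrightarrow> c y \<noteq> c z"
  shows "\<exists>c'. (\<forall>y\<in>T. c' y < k) \<and> (\<forall>y\<in>T. \<forall>z\<in>T. {y, z} \<in> E \<longrightarrow> c' y \<noteq> c' z)"
proof -
  let ?N = "nbrs E x \<inter> (T - {x})"
  have "card (c ` ?N) \<le> card ?N" using assms(2) by (simp add: card_image_le)
  also have "\<dots> \<le> card (nbrs E x \<inter> T)" using assms(2) by (intro card_mono) auto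
  finally have "card (c ` ?N) < card {..<k}" using assms(4) by simp
  then have "\<not> {..<k} \<subseteq> c ` ?N" using assms(2) by (meson card_mono finite_Int finite_Diff finite_imageI leD)
  then obtain i where "i < k" and free: "i \<notin> c ` ?N" by blast
  have new: "(c(x := i)) x \<noteq> (c(x := i)) z" if "z \<in> T" "{x, z} \<in> E" for z
  proof -
    have "z \<noteq> x" using that pair_edges_no_loop[OF assms(1)] by blast
    with that have "z \<in> ?N" unfolding nbrs_def by (simp add: insert_commute)
    with free \<open>z \<noteq> x\<close> show ?thesis by auto
  qed
  have "(c(x := i)) y \<noteq> (c(x := i)) z" if "y \<in> T" "z \<in> T" "{y, z} \<in> E" for y z
  proof (cases "y = x \<or> z = x")
    case True
    with new that show ?thesis by (metis insert_commute)
  next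
    case False
    with proper that show ?thesis by auto
  qed
  moreover have "\<forall>y\<in>T. (c(x := i)) y < k" using less \<open>i < k\<close> by auto
  ultimately show ?thesis by blast
qed

lemma sparse_graph_coloring:
  assumes "finite T" "0 < a" "pair_edges E"
    and sparse: "\<And>U. U \<subseteq> T \<Longrightarrow> card {e\<in>E. e \<subseteq> U} \<le> a * (card U - 1)"
  shows "\<exists>c. (\<forall>x\<in>T. c x < 2 * a) \<and> (\<forall>x\<in>T. \<forall>y\<in>T. {x, y} \<in> E \<longrightarrow> c x \<noteq> c y)"
  using assms(1) sparse
proof (induction "card T" arbitrary: T rule: less_induct)
  case less
  show ?case
  proof (cases "T = {}")
    case False
    obtain x where "x \<in> T" and low: "card (nbrs E x \<inter> T) < 2 * a"
      using exists_degree_less[OF less.prems(1) False assms(3) _ assms(2)] less.prems(2) by blast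
    have "card (T - {x}) < card T" using less.prems(1) \<open>x \<in> T\<close> by (rule card_Diff1_less)
    moreover have "finite (T - {x})" using less.prems(1) by simp
    moreover have "\<And>U. U \<subseteq> T - {x} \<Longrightarrow> card {e\<in>E. e \<subseteq> U} \<le> a * (card U - 1)"
      using less.prems(2) by blast
    ultimately have "\<exists>c. (\<forall>y\<in>T - {x}. c y < 2 * a) \<and>
        (\<forall>y\<in>T - {x}. \<forall>z\<in>T - {x}. {y, z} \<in> E \<longrightarrow> c y \<noteq> c z)"
      by (rule less.hyps)
    then show ?thesis
      using coloring_extend[OF assms(3) less.prems(1) \<open>x \<in> T\<close> low] by blast
  qed simp
qed

lemma arboricity_coloring:
  assumes "finite E" "pair_edges E" "finite S" "0 < arboricity E"
  shows "\<exists>c. (\<forall>x\<in>S. c x < 2 * arboricity E) \<and> (\<forall>x\<in>S. \<forall>y\<in>S. {x, y} \<in> E \<longrightarrow> c x \<noteq> c y)"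
  using sparse_graph_coloring[OF assms(3,4,2)] card_edges_within_le[OF assms(1,2)]
    finite_subset[OF _ assms(3)] by blast

definition some_coloring :: "nat set \<Rightarrow> nat set set \<Rightarrow> nat \<Rightarrow> nat \<Rightarrow> nat" where
  "some_coloring S R k = (SOME c. (\<forall>x\<in>S. c x < k) \<and> (\<forall>x\<in>S. \<forall>y\<in>S. {x, y} \<in> R \<longrightarrow> c x \<noteq> c y))"

lemma some_coloring:
  assumes "\<exists>c. (\<forall>x\<in>S. c x < k) \<and> (\<forall>x\<in>S. \<forall>y\<in>S. {x, y} \<in> R \<longrightarrow> c x \<noteq> c y)"
  shows "x \<in> S \<Longrightarrow> some_coloring S R k x < k"
    and "x \<in> S \<Longrightarrow> y \<in> S \<Longrightarrow> {x, y} \<in> R \<Longrightarrow> some_coloring S R k x \<noteq> some_coloring S R k y"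
  using someI_ex[OF assms] unfolding some_coloring_def by blast+

section \<open>Blocks and the relay layout\<close>

definition block_size :: "nat \<Rightarrow> nat \<Rightarrow> nat" where
  "block_size n a = n div a + 1"

definition block_of :: "nat \<Rightarrow> nat \<Rightarrow> nat \<Rightarrow> nat" where
  "block_of n a i = i div block_size n a"

lemma card_block_le: "card {i. i < n \<and> block_of n a i = G} \<le> block_size n a"
proof -
  let ?b = "block_size n a"
  have "{i. i < n \<and> block_of n a i = G} \<subseteq> {G * ?b..<G * ?b + ?b}"
  proof
    fix i assume "i \<in> {i. i < n \<and> block_of n a i = G}"
    then have "i div ?b = G" unfolding block_of_def by simp
    then have "G * ?b + i mod ?b = i" using div_mult_mod_eq[of i ?b] by (simp add: mult.commute)
    moreover have "i mod ?b < ?b" unfolding block_size_def by simp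
    ultimately show "i \<in> {G * ?b..<G * ?b + ?b}" unfolding atLeastLessThan_iff by linarith
  qed
  then show ?thesis using card_mono[of "{G * ?b..<G * ?b + ?b}"] by simp
qed

lemma block_of_less:
  assumes "0 < a" "i < n"
  shows "block_of n a i < a"
proof -
  have "n div a * a + n mod a = n" "n mod a < a" using assms(1) by simp_all
  then have "n < n div a * a + a" by linarith
  then have "n < a * block_size n a" unfolding block_size_def by (simp add: algebra_simps)
  with assms(2) show ?thesis
    unfolding block_of_def by (simp add: less_mult_imp_div_less mult.commute)
qed

text \<open>The entries of the lists of the vertices of block \<open>G\<close> (vertex \<open>i\<close> holding \<open>d ! i\<close> entries)
  occupy the positions \<open>0, \<dots>, block_total n a d G - 1\<close>; vertex \<open>i\<close> owns the positions from
  \<open>offset n a d i\<close> on.\<close>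

definition offset :: "nat \<Rightarrow> nat \<Rightarrow> nat list \<Rightarrow> nat \<Rightarrow> nat" where
  "offset n a d i = sum_list (map ((!) d) (filter (\<lambda>k. block_of n a k = block_of n a i) [0..<i]))"

definition block_total :: "nat \<Rightarrow> nat \<Rightarrow> nat list \<Rightarrow> nat \<Rightarrow> nat" where
  "block_total n a d G = sum_list (map ((!) d) (filter (\<lambda>k. block_of n a k = G) [0..<n]))"

definition slot_owner :: "nat \<Rightarrow> nat \<Rightarrow> nat list \<Rightarrow> nat \<Rightarrow> nat \<Rightarrow> nat" where
  "slot_owner n a d G x =
    (THE i. i < n \<and> block_of n a i = G \<and> offset n a d i \<le> x \<and> x < offset n a d i + d ! i)"

lemma filter_upt_split:
  assumes "j < m"
  shows "filter P [0..<m] = filter P [0..<j] @ filter P [j] @ filter P [Suc j..<m]"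
proof -
  have "[0..<m] = [0..<j] @ [j..<m]" using upt_add_eq_append[of 0 j "m - j"] assms by simp
  also have "[j..<m] = j # [Suc j..<m]" using assms by (simp add: upt_conv_Cons)
  finally show ?thesis by simp
qed

lemma offset_add_le_offset:
  assumes "i < j" "block_of n a i = block_of n a j"
  shows "offset n a d i + d ! i \<le> offset n a d j"
  using assms unfolding offset_def by (simp add: filter_upt_split[OF assms(1)])

lemma offset_add_le_block_total:
  assumes "i < n" "block_of n a i = G"
  shows "offset n a d i + d ! i \<le> block_total n a d G"
  using assms unfolding offset_def block_total_def by (simp add: filter_upt_split[OF assms(1)])

lemma slot_owner_eq:
  assumes "i < n" "block_of n a i = G" "offset n a d i \<le> x" "x < offset n a d i + d ! i"
  shows "slot_owner n a d G x = i"
  unfolding slot_owner_def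
proof (rule the_equality)
  fix j assume j: "j < n \<and> block_of n a j = G \<and> offset n a d j \<le> x \<and> x < offset n a d j + d ! j"
  show "j = i"
  proof (rule ccontr)
    assume "j \<noteq> i"
    then consider "j < i" | "i < j" by linarith
    then show False
      using offset_add_le_offset[of j i n a d] offset_add_le_offset[of i j n a d] j assms by cases auto
  qed
qed (use assms in simp)

text \<open>The message vertex \<open>i\<close>, holding the list \<open>L\<close>, sends to the relay \<open>h\<close>: the entry of \<open>L\<close>
  stored at the position congruent to \<open>h\<close> modulo \<open>n\<close>, shifted by one so that \<open>0\<close> means
  ``nothing''.\<close>

definition relay_entry :: "nat \<Rightarrow> nat \<Rightarrow> nat list \<Rightarrow> nat list \<Rightarrow> nat \<Rightarrow> nat \<Rightarrow> nat" where
  "relay_entry n a d L i h = (case find (\<lambda>k. (offset n a d i + k) mod n = h) [0..<length L] of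
      None \<Rightarrow> 0 | Some k \<Rightarrow> Suc (L ! k))"

lemma relay_entry_eq:
  assumes "k < length L" "length L \<le> n"
  shows "relay_entry n a d L i ((offset n a d i + k) mod n) = Suc (L ! k)"
proof -
  let ?P = "\<lambda>k'. (offset n a d i + k') mod n = (offset n a d i + k) mod n"
  have "\<not> ?P j" if "j < k" for j
  proof
    assume "?P j"
    then have "n dvd (offset n a d i + k) - (offset n a d i + j)"
      using that by (subst mod_eq_dvd_iff_nat[symmetric]) auto
    then have "n dvd k - j" by simp
    moreover have "0 < k - j" "k - j < n" using that assms by auto
    ultimately show False using nat_dvd_not_less by blast
  qed
  then have "find ?P [0..<length L] = Some k"
    using assms(1) unfolding find_Some_iff by auto
  then show ?thesis unfolding relay_entry_def by simp
qed

text \<open>Relay \<open>h\<close> has received the vector \<open>w\<close> (indexed by sender); the entry at position \<open>x\<close>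
  (with \<open>x mod n = h\<close>) of block \<open>G\<close> is the one sent by the owner of \<open>x\<close>.\<close>

definition slot_entry :: "nat \<Rightarrow> nat \<Rightarrow> nat list \<Rightarrow> nat list \<Rightarrow> nat \<Rightarrow> nat \<Rightarrow> nat" where
  "slot_entry n a d w G x = (if x < block_total n a d G then w ! slot_owner n a d G x else 0)"

text \<open>Block totals are at most \<open>2n\<close>, so relay \<open>h\<close> holds the positions \<open>h\<close> and \<open>h + n\<close> of each
  block; it packs both, as base-\<open>(n + 1)\<close> digits, into one message to each member \<open>m\<close>.\<close>

definition relay_packet :: "nat \<Rightarrow> nat \<Rightarrow> nat list \<Rightarrow> nat list \<Rightarrow> nat \<Rightarrow> nat \<Rightarrow> nat" where
  "relay_packet n a d w h m = min (slot_entry n a d w (block_of n a m) h) n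
      + (n + 1) * min (slot_entry n a d w (block_of n a m) (h + n)) n"

definition unpack_slot :: "nat \<Rightarrow> nat list \<Rightarrow> nat \<Rightarrow> nat" where
  "unpack_slot n p x = (p ! (x mod n) div (n + 1) ^ (x div n)) mod (n + 1) - 1"

lemma relay_packet_le: "relay_packet n a d w h m \<le> n + (n + 1) * n"
  unfolding relay_packet_def by (intro add_mono mult_le_mono2) simp_all

lemma packed_digits:
  fixes x y n :: nat
  assumes "x \<le> n" "y \<le> n"
  shows "(x + (n + 1) * y) mod (n + 1) = x" "(x + (n + 1) * y) div (n + 1) = y"
proof -
  have "(x + (n + 1) * y) mod (n + 1) = x mod (n + 1)" by (metis mod_mult_self2)
  then show "(x + (n + 1) * y) mod (n + 1) = x" using assms(1) by simp
  have "(x + (n + 1) * y) div (n + 1) = y + x div (n + 1)"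
    by (metis div_mult_self2 add_eq_0_iff_both_eq_0 one_neq_zero)
  then show "(x + (n + 1) * y) div (n + 1) = y" using assms(1) by simp
qed

lemma unpack_slot_pack:
  assumes "x < 2 * n" "f x \<le> n"
    and "p ! (x mod n) = min (f (x mod n)) n + (n + 1) * min (f (x mod n + n)) n"
  shows "unpack_slot n p x = f x - 1"
proof (cases "x < n")
  case True
  then have "p ! x = f x + (n + 1) * min (f (x + n)) n" using assms(2,3) by simp
  with True show ?thesis using packed_digits(1)[OF assms(2)] unfolding unpack_slot_def by simp
next
  case False
  with assms(1) have "x div n = 1" "x mod n + n = x" by (auto simp: div_nat_eqI le_mod_geq)
  then have "p ! (x mod n) = min (f (x mod n)) n + (n + 1) * f x" using assms(2,3) by simp
  with \<open>x div n = 1\<close> assms(2) show ?thesis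
    using packed_digits(2)[OF _ assms(2)] unfolding unpack_slot_def by simp
qed

definition block_members :: "nat list \<Rightarrow> nat \<Rightarrow> nat \<Rightarrow> nat \<Rightarrow> nat set" where
  "block_members vs n a G = {vs ! i | i. i < n \<and> block_of n a i = G}"

definition gathered_edges :: "nat list \<Rightarrow> nat \<Rightarrow> nat \<Rightarrow> nat list \<Rightarrow> nat list \<Rightarrow> nat \<Rightarrow> nat set set" where
  "gathered_edges vs n a d p G = {{vs ! i, vs ! unpack_slot n p (offset n a d i + k)} | i k.
      i < n \<and> block_of n a i = G \<and> k < d ! i}"

section \<open>The algorithm\<close>

definition list_index :: "nat list \<Rightarrow> nat \<Rightarrow> nat" where
  "list_index xs w = length (takeWhile (\<lambda>u. u \<noteq> w) xs)"

lemma list_index_nth: "distinct xs \<Longrightarrow> i < length xs \<Longrightarrow> list_index xs (xs ! i) = i"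
proof (induction xs arbitrary: i)
  case (Cons x xs)
  then show ?case
    by (cases i) (auto simp: list_index_def nth_mem)
qed simp

text \<open>A state is \<open>[r, a, v, n]\<close> (round, arboricity, own ID, number of vertices), followed by blocks
  of length \<open>n\<close>: the sorted IDs, the adjacency row of \<open>v\<close>, and for each completed round the
  messages received in it, indexed like the IDs and including the message to itself.\<close>

definition chunk :: "nat list \<Rightarrow> nat \<Rightarrow> nat list" where
  "chunk s k = take (s ! 3) (drop (4 + k * s ! 3) s)"

definition my_index :: "nat list \<Rightarrow> nat" where
  "my_index s = list_index (chunk s 0) (s ! 2)"

definition block_nbrs :: "nat \<Rightarrow> nat \<Rightarrow> nat list \<Rightarrow> nat \<Rightarrow> nat list" where
  "block_nbrs n a row i = filter (\<lambda>j. row ! j = 1 \<and> block_of n a j = block_of n a i) [0..<n]"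

definition my_block_nbrs :: "nat list \<Rightarrow> nat list" where
  "my_block_nbrs s = block_nbrs (s ! 3) (s ! 1) (chunk s 1) (my_index s)"

text \<open>The clamps at \<open>n\<close> only serve the bound on message sizes, which is proved for arbitrary
  states; on actual runs they never take effect.\<close>

definition alg_send :: "nat list \<Rightarrow> nat \<Rightarrow> nat" where
  "alg_send s w = (let n = s ! 3; a = s ! 1; i = my_index s; j = list_index (chunk s 0) w in
     if s ! 0 = 0 then length (my_block_nbrs s)
     else if s ! 0 = 1 then min (relay_entry n a (chunk s 2) (my_block_nbrs s) i j) n
     else if s ! 0 = 2 then relay_packet n a (chunk s 2) (chunk s 3) i j
     else 0)"

definition alg_step :: "nat list \<Rightarrow> (nat \<Rightarrow> nat) \<Rightarrow> nat list" where
  "alg_step s r = s[0 := Suc (s ! 0)] @ map (\<lambda>u. if u = s ! 2 then alg_send s u else r u) (chunk s 0)"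

definition alg_init :: "nat \<Rightarrow> nat \<Rightarrow> nat set \<Rightarrow> nat \<Rightarrow> nat set \<Rightarrow> nat list" where
  "alg_init n a V v N = [0, a, v, n] @ sorted_list_of_set V
     @ map (\<lambda>u. if u \<in> N then 1 else 0) (sorted_list_of_set V)"

definition alg_output :: "nat list \<Rightarrow> nat" where
  "alg_output s = (let n = s ! 3; a = s ! 1; G = block_of n a (my_index s) in
     G * (2 * a) + some_coloring (block_members (chunk s 0) n a G)
       (gathered_edges (chunk s 0) n a (chunk s 2) (chunk s 4) G) (2 * a) (s ! 2) + 1)"

definition block_coloring_alg :: "nat list cc_alg" where
  "block_coloring_alg = \<lparr>cc_init = alg_init, cc_send = alg_send, cc_step = alg_step, cc_out = alg_output\<rparr>"

lemma alg_step_nth: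
  assumes "4 + s ! 3 \<le> length s"
  shows "alg_step s r ! 0 = Suc (s ! 0)" "alg_step s r ! 1 = s ! 1" "alg_step s r ! 2 = s ! 2"
    "alg_step s r ! 3 = s ! 3" "length (alg_step s r) = length s + s ! 3"
proof -
  have "s \<noteq> []" using assms by auto
  with assms show "alg_step s r ! 0 = Suc (s ! 0)" "alg_step s r ! 1 = s ! 1" "alg_step s r ! 2 = s ! 2"
    "alg_step s r ! 3 = s ! 3" "length (alg_step s r) = length s + s ! 3"
    by (simp_all add: alg_step_def nth_append chunk_def)
qed

lemma chunk_alg_step_old:
  assumes "4 + (k + 1) * s ! 3 \<le> length s"
  shows "chunk (alg_step s r) k = chunk s k"
  using assms alg_step_nth(4)[of s r] unfolding chunk_def alg_step_def by simp

lemma chunk_alg_step_new: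
  assumes "length s = 4 + k * s ! 3" "1 \<le> k"
  shows "chunk (alg_step s r) k = map (\<lambda>u. if u = s ! 2 then alg_send s u else r u) (chunk s 0)"
proof -
  have "s ! 3 \<le> k * s ! 3" using assms(2) by simp
  then show ?thesis
    using assms alg_step_nth(4)[of s r] unfolding chunk_def alg_step_def by simp
qed

lemma alg_send_less:
  assumes "s ! 0 < 3"
  shows "alg_send s w < (s ! 3 + 1) ^ 2"
proof -
  have "length (my_block_nbrs s) \<le> s ! 3"
    unfolding my_block_nbrs_def block_nbrs_def by (metis length_filter_le length_upt minus_nat.diff_0)
  then have "alg_send s w \<le> s ! 3 + (s ! 3 + 1) * s ! 3"
    using assms relay_packet_le unfolding alg_send_def Let_def by (auto simp: min_le_iff_disj)
  also have "\<dots> < (s ! 3 + 1) ^ 2" by (simp add: power2_eq_square algebra_simps)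
  finally show ?thesis .
qed

lemma square_le_powr: "2 \<le> a \<Longrightarrow> 0 < \<epsilon> \<Longrightarrow> real (2 * a * a) \<le> 2 * real a powr (2 + \<epsilon>)"
  by (simp add: powr_mono flip: powr_numeral power2_eq_square)


locale input_graph =
  fixes V :: "nat set" and E :: "nat set set" and a :: nat
  assumes finite_V: "finite V" and V_nonempty: "V \<noteq> {}" and simple: "simple_graph V E"
    and arboricity_E: "arboricity E = a" and two_le_a: "2 \<le> a"
begin

definition vs where "vs = sorted_list_of_set V"
definition n where "n = card V"
definition row where "row v = map (\<lambda>u. if u \<in> nbrs E v then 1 else 0) vs"
abbreviation run where "run \<equiv> cc_run block_coloring_alg a V E"

lemma vs: "distinct vs" "set vs = V" "length vs = n"
  unfolding vs_def n_def using finite_V by auto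

lemma n_pos: "0 < n"
  unfolding n_def using finite_V V_nonempty by (simp add: card_gt_0_iff)

lemma nth_vs_eq_iff: "i < n \<Longrightarrow> j < n \<Longrightarrow> vs ! i = vs ! j \<longleftrightarrow> i = j"
  using vs nth_eq_iff_index_eq by metis

lemma obtain_index:
  assumes "v \<in> V" obtains i where "i < n" "v = vs ! i"
  using assms vs by (metis in_set_conv_nth)

lemma row_nth: "j < n \<Longrightarrow> row v ! j = (if {vs ! j, v} \<in> E then 1 else 0)"
  unfolding row_def nbrs_def using vs by simp

lemma finite_E: "finite E"
  using simple_graph_finite[OF finite_V simple] .

lemma pair_edges_E: "pair_edges E"
  using simple_graph_pair_edges[OF simple] .

lemma block_coloring_alg_sel:
  "cc_init block_coloring_alg = alg_init" "cc_send block_coloring_alg = alg_send"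
  "cc_step block_coloring_alg = alg_step" "cc_out block_coloring_alg = alg_output"
  by (simp_all add: block_coloring_alg_def)

lemma run_0: "run 0 v = [0, a, v, n] @ vs @ row v"
  by (simp add: block_coloring_alg_sel alg_init_def vs_def n_def row_def)

lemma run_Suc:
  "run (Suc t) v = alg_step (run t v) (\<lambda>u. if u \<in> V \<and> u \<noteq> v then alg_send (run t u) v else 0)"
  by (simp only: cc_run.simps block_coloring_alg_sel)

lemma run_shape:
  "length (run t v) = 4 + (t + 2) * n \<and> run t v ! 0 = t \<and> run t v ! 1 = a \<and>
   run t v ! 2 = v \<and> run t v ! 3 = n"
proof (induction t)
  case 0
  show ?case unfolding run_0 using vs by (simp add: row_def)
next
  case (Suc t)
  then show ?case unfolding run_Suc using alg_step_nth[of "run t v"] by simp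
qed

lemma chunk_run: "chunk (run t v) 0 = vs" "chunk (run t v) 1 = row v"
proof (induction t)
  case 0
  have drop4: "drop (4 + m) (x0 # x1 # x2 # x3 # xs) = drop m xs" for m x0 x1 x2 x3 and xs :: "nat list"
    by (simp add: eval_nat_numeral)
  have "length (row v) = n" using vs by (simp add: row_def)
  then show "chunk (run 0 v) 0 = vs" "chunk (run 0 v) 1 = row v"
    unfolding chunk_def run_0 using vs by (simp_all add: drop4 row_def)
next
  case (Suc t)
  then show "chunk (run (Suc t) v) 0 = vs" "chunk (run (Suc t) v) 1 = row v"
    unfolding run_Suc using run_shape[of t v] by (simp_all add: chunk_alg_step_old)
qed

lemma chunk_run_received:
  "k < t \<Longrightarrow> chunk (run t v) (k + 2) = map (\<lambda>i. alg_send (run k (vs ! i)) v) [0..<n]"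
proof (induction t)
  case (Suc t)
  have shape: "length (run t v) = 4 + (t + 2) * n" "run t v ! 2 = v" "run t v ! 3 = n"
    using run_shape by auto
  show ?case
  proof (cases "k < t")
    case True
    then have "(k + 3) * n \<le> (t + 2) * n" by (intro mult_le_mono1) simp
    with shape have "chunk (run (Suc t) v) (k + 2) = chunk (run t v) (k + 2)"
      unfolding run_Suc by (subst chunk_alg_step_old) (auto simp: algebra_simps)
    with Suc.IH True show ?thesis by simp
  next
    case False
    with Suc.prems have "k = t" by simp
    have "chunk (run (Suc t) v) (t + 2) = map (\<lambda>u. if u = v then alg_send (run t v) u
        else if u \<in> V \<and> u \<noteq> v then alg_send (run t u) v else 0) vs"
      unfolding run_Suc using chunk_alg_step_new[of "run t v" "t + 2"] shape chunk_run(1)[of t v]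
      by simp
    also have "\<dots> = map (\<lambda>u. alg_send (run t u) v) vs"
      using vs by (intro map_cong refl) auto
    also have "\<dots> = map (\<lambda>u. alg_send (run t u) v) (map (\<lambda>i. vs ! i) [0..<n])"
      using map_nth[of vs] vs(3) by simp
    also have "\<dots> = map (\<lambda>i. alg_send (run t (vs ! i)) v) [0..<n]" by simp
    finally show ?thesis using \<open>k = t\<close> by simp
  qed
qed simp

lemma my_index_run: "i < n \<Longrightarrow> my_index (run t (vs ! i)) = i"
  unfolding my_index_def using run_shape chunk_run list_index_nth vs by metis

lemma list_index_run: "h < n \<Longrightarrow> list_index (chunk (run t v) 0) (vs ! h) = h"
  using chunk_run list_index_nth vs by metis

definition block_adj where "block_adj i = block_nbrs n a (row (vs ! i)) i"
definition degs where "degs = map (\<lambda>i. length (block_adj i)) [0..<n]"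
definition relay_vector where
  "relay_vector h = map (\<lambda>i. min (relay_entry n a degs (block_adj i) i h) n) [0..<n]"
definition packets where
  "packets m = map (\<lambda>h. relay_packet n a degs (relay_vector h) h m) [0..<n]"

lemma my_block_nbrs_run: "i < n \<Longrightarrow> my_block_nbrs (run t (vs ! i)) = block_adj i"
  unfolding my_block_nbrs_def block_adj_def using my_index_run run_shape chunk_run by simp

lemma send_run_0: "i < n \<Longrightarrow> alg_send (run 0 (vs ! i)) w = length (block_adj i)"
  using run_shape my_block_nbrs_run unfolding alg_send_def by (simp del: cc_run.simps)

lemma chunk_run_2:
  assumes "0 < t" shows "chunk (run t v) 2 = degs"
proof -
  have "chunk (run t v) (0 + 2) = map (\<lambda>i. alg_send (run 0 (vs ! i)) v) [0..<n]"
    using assms by (rule chunk_run_received)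
  also have "\<dots> = degs" unfolding degs_def by (intro map_cong refl send_run_0) simp
  finally show ?thesis by (simp only: add.left_neutral)
qed

lemma send_run_1:
  "i < n \<Longrightarrow> h < n \<Longrightarrow> alg_send (run 1 (vs ! i)) (vs ! h) = min (relay_entry n a degs (block_adj i) i h) n"
  using run_shape my_block_nbrs_run my_index_run chunk_run_2 list_index_run
  unfolding alg_send_def Let_def by (simp del: cc_run.simps)

lemma chunk_run_3:
  assumes "1 < t" "h < n" shows "chunk (run t (vs ! h)) 3 = relay_vector h"
proof -
  have "chunk (run t (vs ! h)) (1 + 2) = map (\<lambda>i. alg_send (run 1 (vs ! i)) (vs ! h)) [0..<n]"
    using assms(1) by (rule chunk_run_received)
  also have "\<dots> = relay_vector h"
    unfolding relay_vector_def using assms(2) by (intro map_cong refl send_run_1) auto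
  finally show ?thesis by (simp add: numeral_3_eq_3)
qed

lemma send_run_2:
  "m < n \<Longrightarrow> h < n \<Longrightarrow> alg_send (run 2 (vs ! h)) (vs ! m) = relay_packet n a degs (relay_vector h) h m"
  using run_shape my_index_run chunk_run_2 chunk_run_3 list_index_run
  unfolding alg_send_def Let_def by (simp del: cc_run.simps)

lemma chunk_run_4:
  assumes "m < n" shows "chunk (run 3 (vs ! m)) 4 = packets m"
proof -
  have "chunk (run 3 (vs ! m)) (2 + 2) = map (\<lambda>h. alg_send (run 2 (vs ! h)) (vs ! m)) [0..<n]"
    by (rule chunk_run_received) simp
  also have "\<dots> = packets m"
    unfolding packets_def using assms by (intro map_cong refl send_run_2) auto
  finally show ?thesis by simp
qed

lemma set_block_adj:
  "i < n \<Longrightarrow> set (block_adj i) = {j. j < n \<and> {vs ! j, vs ! i} \<in> E \<and> block_of n a j = block_of n a i}"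
  unfolding block_adj_def block_nbrs_def by (auto simp: row_nth split: if_splits)

lemma length_block_adj_le: "length (block_adj i) \<le> n"
  unfolding block_adj_def block_nbrs_def by (metis length_filter_le length_upt minus_nat.diff_0)

lemma block_members_image: "block_members vs n a G = (!) vs ` {i. i < n \<and> block_of n a i = G}"
  unfolding block_members_def by auto

lemma length_block_adj:
  assumes "i < n"
  shows "length (block_adj i) = card (nbrs E (vs ! i) \<inter> block_members vs n a (block_of n a i))"
proof -
  let ?J = "{j. j < n \<and> {vs ! j, vs ! i} \<in> E \<and> block_of n a j = block_of n a i}"
  have "length (block_adj i) = card ?J"
    using set_block_adj[OF assms] distinct_card[of "block_adj i"]
    unfolding block_adj_def block_nbrs_def by simp
  also have "\<dots> = card ((!) vs ` ?J)"
    by (rule card_image[symmetric]) (auto intro: inj_onI simp: nth_vs_eq_iff)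
  also have "(!) vs ` ?J = nbrs E (vs ! i) \<inter> block_members vs n a (block_of n a i)"
    unfolding block_members_image nbrs_def by blast
  finally show ?thesis .
qed

lemma block_total_le: "block_total n a degs G \<le> 2 * n"
proof -
  let ?I = "{i. i < n \<and> block_of n a i = G}"
  let ?S = "block_members vs n a G"
  have S: "?S = (!) vs ` ?I" by (rule block_members_image)
  have inj: "inj_on ((!) vs) ?I" by (simp add: inj_on_def nth_vs_eq_iff)
  have "block_total n a degs G = (\<Sum>i\<in>?I. length (block_adj i))"
    unfolding block_total_def degs_def
    by (subst sum_list_distinct_conv_sum_set) (auto intro: sum.cong)
  also have "\<dots> = (\<Sum>i\<in>?I. card (nbrs E (vs ! i) \<inter> ?S))"
    by (rule sum.cong) (simp_all add: length_block_adj)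
  also have "\<dots> = (\<Sum>x\<in>?S. card (nbrs E x \<inter> ?S))"
    unfolding S by (simp add: sum.reindex[OF inj])
  also have "\<dots> = 2 * card {e\<in>E. e \<subseteq> ?S}"
    by (rule sum_card_nbrs_Int) (simp_all add: S pair_edges_E)
  also have "\<dots> \<le> 2 * (a * (card ?S - 1))"
    using card_edges_within_le[OF finite_E pair_edges_E] arboricity_E S by simp
  also have "\<dots> \<le> 2 * (a * (block_size n a - 1))"
  proof -
    have "card ?S \<le> block_size n a"
      using card_block_le[of n a G] card_image_le[of ?I "(!) vs"] S by simp
    then show ?thesis by (simp add: diff_le_mono)
  qed
  also have "\<dots> \<le> 2 * n" unfolding block_size_def by simp
  finally show ?thesis .
qed

lemma slot_entry_relay_vector:
  assumes "i < n" "block_of n a i = G" "k < length (block_adj i)"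
  defines "x \<equiv> offset n a degs i + k"
  shows "slot_entry n a degs (relay_vector (x mod n)) G x = Suc (block_adj i ! k)"
proof -
  have degs_i: "degs ! i = length (block_adj i)" using assms(1) by (simp add: degs_def)
  have "x < block_total n a degs G"
    using offset_add_le_block_total[OF assms(1,2), of degs] degs_i assms(3) unfolding x_def by simp
  moreover have "slot_owner n a degs G x = i"
    using slot_owner_eq[OF assms(1,2)] degs_i assms(3) unfolding x_def by simp
  moreover have "block_adj i ! k < n"
    using set_block_adj[OF assms(1)] assms(3) nth_mem by blast
  ultimately show ?thesis
    using relay_entry_eq[OF assms(3) length_block_adj_le] assms(1) n_pos
    unfolding slot_entry_def relay_vector_def x_def by simp
qed

lemma unpack_packets:
  assumes "m < n" "i < n" "block_of n a i = block_of n a m" "k < length (block_adj i)"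
  shows "unpack_slot n (packets m) (offset n a degs i + k) = block_adj i ! k"
proof -
  define f where "f y = slot_entry n a degs (relay_vector (y mod n)) (block_of n a m) y" for y
  let ?x = "offset n a degs i + k"
  have "f ?x = Suc (block_adj i ! k)"
    unfolding f_def using slot_entry_relay_vector[OF assms(2,3,4)] .
  moreover have "?x < 2 * n"
    using offset_add_le_block_total[OF assms(2,3), of degs] block_total_le[of "block_of n a m"]
      assms(2,4) by (simp add: degs_def)
  moreover have "block_adj i ! k < n"
    using set_block_adj[OF assms(2)] assms(4) nth_mem by blast
  ultimately show ?thesis
    using unpack_slot_pack[of ?x n f "packets m"] n_pos
    unfolding packets_def relay_packet_def f_def by simp
qed

lemma gathered_edges_eq:
  assumes "m < n"
  shows "gathered_edges vs n a degs (packets m) (block_of n a m)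
    = {e\<in>E. e \<subseteq> block_members vs n a (block_of n a m)}"
  (is "?R = {e\<in>E. e \<subseteq> ?S}")
proof
  show "?R \<subseteq> {e\<in>E. e \<subseteq> ?S}"
  proof
    fix e assume "e \<in> ?R"
    then obtain i k where e: "e = {vs ! i, vs ! unpack_slot n (packets m) (offset n a degs i + k)}"
      and i: "i < n" "block_of n a i = block_of n a m" and k: "k < length (block_adj i)"
      unfolding gathered_edges_def degs_def by auto
    define j where "j = block_adj i ! k"
    have "j \<in> set (block_adj i)" using k unfolding j_def by simp
    then have j: "j < n" "{vs ! j, vs ! i} \<in> E" "block_of n a j = block_of n a m"
      using set_block_adj[OF i(1)] i(2) by auto
    have "e = {vs ! j, vs ! i}" using e unpack_packets[OF assms i k] unfolding j_def by auto
    moreover have "vs ! i \<in> ?S" "vs ! j \<in> ?S"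
      using i j unfolding block_members_def by blast+
    ultimately show "e \<in> {e\<in>E. e \<subseteq> ?S}" using j(2) by simp
  qed
next
  show "{e\<in>E. e \<subseteq> ?S} \<subseteq> ?R"
  proof
    fix e assume e: "e \<in> {e\<in>E. e \<subseteq> ?S}"
    then have "e \<in> E" "e \<subseteq> ?S" by auto
    then obtain u w where "e = {u, w}" using pair_edges_E unfolding pair_edges_def by blast
    with \<open>e \<subseteq> ?S\<close> obtain i j where ij: "u = vs ! i" "i < n" "block_of n a i = block_of n a m"
      "w = vs ! j" "j < n" "block_of n a j = block_of n a m"
      unfolding block_members_def by blast
    have "{vs ! j, vs ! i} \<in> E" using \<open>e \<in> E\<close> \<open>e = {u, w}\<close> ij by (simp add: insert_commute)
    then have "j \<in> set (block_adj i)" using set_block_adj[OF ij(2)] ij by simp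
    then obtain k where k: "k < length (block_adj i)" "block_adj i ! k = j"
      by (auto simp: in_set_conv_nth)
    then have "unpack_slot n (packets m) (offset n a degs i + k) = j"
      using unpack_packets[OF assms ij(2,3)] by simp
    moreover have "k < degs ! i" using k ij(2) by (simp add: degs_def)
    ultimately show "e \<in> ?R"
      using ij \<open>e = {u, w}\<close> unfolding gathered_edges_def by blast
  qed
qed

definition block_color where
  "block_color G = some_coloring (block_members vs n a G) {e\<in>E. e \<subseteq> block_members vs n a G} (2 * a)"

lemma block_color:
  assumes "x \<in> block_members vs n a G"
  shows "block_color G x < 2 * a"
    and "y \<in> block_members vs n a G \<Longrightarrow> {x, y} \<in> E \<Longrightarrow> block_color G x \<noteq> block_color G y"
proof -
  let ?S = "block_members vs n a G"
  have "\<exists>c. (\<forall>x\<in>?S. c x < 2 * a) \<and> (\<forall>x\<in>?S. \<forall>y\<in>?S. {x, y} \<in> {e\<in>E. e \<subseteq> ?S} \<longrightarrow> c x \<noteq> c y)"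
    using arboricity_coloring[OF finite_E pair_edges_E, of ?S] two_le_a arboricity_E
    by (simp add: block_members_image)
  from some_coloring[OF this] assms show "block_color G x < 2 * a"
    and "y \<in> ?S \<Longrightarrow> {x, y} \<in> E \<Longrightarrow> block_color G x \<noteq> block_color G y"
    unfolding block_color_def by auto
qed

lemma output_run:
  assumes "m < n"
  shows "alg_output (run 3 (vs ! m)) = block_of n a m * (2 * a) + block_color (block_of n a m) (vs ! m) + 1"
  using run_shape my_index_run[OF assms] chunk_run chunk_run_2 chunk_run_4[OF assms]
    gathered_edges_eq[OF assms]
  unfolding alg_output_def block_color_def Let_def by (simp del: cc_run.simps)

lemma nth_vs_in_block_members: "m < n \<Longrightarrow> vs ! m \<in> block_members vs n a (block_of n a m)"
  unfolding block_members_def by blast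

lemma output_bounds:
  assumes "v \<in> V"
  shows "1 \<le> alg_output (run 3 v) \<and> alg_output (run 3 v) \<le> 2 * a * a"
proof -
  obtain m where m: "m < n" "v = vs ! m" using obtain_index[OF assms] .
  have "block_of n a m + 1 \<le> a" using block_of_less[of a m n] two_le_a m(1) by simp
  then have "block_of n a m * (2 * a) + 2 * a \<le> 2 * a * a"
    by (metis add_mult_distrib mult.commute mult_1 mult_le_mono2)
  then show ?thesis
    using output_run[OF m(1)] block_color(1)[OF nth_vs_in_block_members[OF m(1)]] m(2) by simp
qed

lemma output_proper: "proper_coloring E (\<lambda>v. alg_output (run 3 v))"
  unfolding proper_coloring_def
proof (intro allI impI)
  fix u v assume e: "{u, v} \<in> E"
  then have "u \<in> V" "v \<in> V" using simple unfolding simple_graph_def by (auto simp: doubleton_eq_iff)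
  then obtain i j where ij: "i < n" "u = vs ! i" "j < n" "v = vs ! j" by (metis obtain_index)
  have ci: "block_color (block_of n a i) u < 2 * a" and cj: "block_color (block_of n a j) v < 2 * a"
    using block_color(1) nth_vs_in_block_members ij by auto
  show "alg_output (run 3 u) \<noteq> alg_output (run 3 v)"
  proof (cases "block_of n a i = block_of n a j")
    case True
    then show ?thesis
      using block_color(2)[OF nth_vs_in_block_members[OF ij(1)]] nth_vs_in_block_members[OF ij(3)] e ij
        output_run[OF ij(1)] output_run[OF ij(3)] by simp
  next
    case False
    have "(block_of n a i * (2 * a) + block_color (block_of n a i) u) div (2 * a) = block_of n a i"
      "(block_of n a j * (2 * a) + block_color (block_of n a j) v) div (2 * a) = block_of n a j"
      using ci cj by simp_all
    with False show ?thesis using output_run[OF ij(1)] output_run[OF ij(3)] ij by fastforce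
  qed
qed

lemma send_run_less: "t < 3 \<Longrightarrow> alg_send (run t u) v < (card V + 1) ^ 2"
  using alg_send_less[of "run t u" v] run_shape[of t u] unfolding n_def by simp

theorem block_coloring_alg_correct:
  assumes "0 < \<epsilon>"
  shows "(\<forall>t < 3. \<forall>u\<in>V. \<forall>v\<in>V. cc_send block_coloring_alg (run t u) v < (card V + 1) ^ 2) \<and>
    proper_coloring E (\<lambda>v. cc_out block_coloring_alg (run 3 v)) \<and>
    (\<forall>v\<in>V. 1 \<le> cc_out block_coloring_alg (run 3 v) \<and>
      real (cc_out block_coloring_alg (run 3 v)) \<le> 2 * real a powr (2 + \<epsilon>))"
proof -
  have "real (alg_output (run 3 v)) \<le> 2 * real a powr (2 + \<epsilon>)" if "v \<in> V" for v
  proof -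
    have "real (alg_output (run 3 v)) \<le> real (2 * a * a)"
      using output_bounds[OF that] of_nat_le_iff by blast
    also have "\<dots> \<le> 2 * real a powr (2 + \<epsilon>)" using two_le_a assms by (rule square_le_powr)
    finally show ?thesis .
  qed
  then show ?thesis
    using send_run_less output_proper output_bounds by (simp add: block_coloring_alg_sel)
qed

end

theorem theorem4:
  fixes \<epsilon> :: real and cid :: nat
  assumes "\<epsilon> > 0"
  shows "\<exists>(A :: nat list cc_alg) (B :: nat) (C :: real) (K :: real) (T :: nat \<Rightarrow> nat).
    (\<forall>n. real (T n) \<le> C * (real (logstar n) + 1)) \<and>
    (\<forall>V E a. finite V \<and> V \<noteq> {} \<and> (\<forall>v\<in>V. v < (card V + 1) ^ cid) \<and>
        simple_graph V E \<and> arboricity E = a \<and> 2 \<le> a \<longrightarrow>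
       (\<forall>t < T (card V). \<forall>u\<in>V. \<forall>v\<in>V.
           cc_send A (cc_run A a V E t u) v < (card V + 1) ^ B) \<and>
       proper_coloring E (\<lambda>v. cc_out A (cc_run A a V E (T (card V)) v)) \<and>
       (\<forall>v\<in>V. 1 \<le> cc_out A (cc_run A a V E (T (card V)) v) \<and>
           real (cc_out A (cc_run A a V E (T (card V)) v)) \<le> K * real a powr (2 + \<epsilon>)))"
proof (rule exI[of _ block_coloring_alg], rule exI[of _ 2], rule exI[of _ 3], rule exI[of _ 2],
    rule exI[of _ "\<lambda>_. 3"], rule conjI, goal_cases)
  case 1
  show ?case by simp
next
  case 2
  show ?case
  proof (intro allI impI, goal_cases)
    case (1 V E a)
    then interpret input_graph V E a by unfold_locales auto
    show ?case using block_coloring_alg_correct[OF assms] by simp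
  qed
qed

end
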